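(* Let $\Gamma$ be a connected finite simple graph on $N\ge3$ vertices with minimum degree $d=2$ and $\varepsilon=\frac12$. Suppose that $\Gamma$ contains no three distinct vertices $u\sim v\sim w$ with $\deg u=\deg v=2$ and $\deg w\in\{2,3\}$. Then $\Gamma$ has no vertex of degree $3$.
   Context: For a finite simple graph $\Gamma=(V,E)$ without isolated vertices, $\deg v$ is the number of neighbours of $v$ and $\mathcal N(v)=\{w\in V: w\sim v\}$. The normalized Laplacian acts on functions $f:V\to\mathbb R$ by $\Delta f(v)=f(v)-\frac{1}{\deg v}\sum_{w\sim v}f(w)$; its eigenvalues are $0=\lambda_1\le\lambda_2\le\dots\le\lambda_N$, and $\varepsilon:=\min_i|1-\lambda_i|$. $d$ denotes the minimum vertex degree. *)

theory Defs
  imports Main "HOL-Analysis.Analysis"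
begin

definition simple_graph :: "'a set \<Rightarrow> ('a \<Rightarrow> 'a \<Rightarrow> bool) \<Rightarrow> bool" where
  "simple_graph V E \<longleftrightarrow> finite V \<and> (\<forall>u w. E u w \<longrightarrow> u \<in> V \<and> w \<in> V)
     \<and> (\<forall>u w. E u w \<longrightarrow> E w u) \<and> (\<forall>u. \<not> E u u)"

definition connected_graph :: "'a set \<Rightarrow> ('a \<Rightarrow> 'a \<Rightarrow> bool) \<Rightarrow> bool" where
  "connected_graph V E \<longleftrightarrow> (\<forall>u\<in>V. \<forall>v\<in>V. E\<^sup>*\<^sup>* u v)"

definition nbrs :: "'a set \<Rightarrow> ('a \<Rightarrow> 'a \<Rightarrow> bool) \<Rightarrow> 'a \<Rightarrow> 'a set" where
  "nbrs V E v = {w \<in> V. E v w}"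

definition deg :: "'a set \<Rightarrow> ('a \<Rightarrow> 'a \<Rightarrow> bool) \<Rightarrow> 'a \<Rightarrow> nat" where
  "deg V E v = card (nbrs V E v)"

definition min_degree :: "'a set \<Rightarrow> ('a \<Rightarrow> 'a \<Rightarrow> bool) \<Rightarrow> nat" where
  "min_degree V E = Min (deg V E ` V)"

definition norm_laplacian :: "'a set \<Rightarrow> ('a \<Rightarrow> 'a \<Rightarrow> bool) \<Rightarrow> ('a \<Rightarrow> real) \<Rightarrow> 'a \<Rightarrow> real" where
  "norm_laplacian V E f v = f v - (1 / real (deg V E v)) * (\<Sum>w\<in>nbrs V E v. f w)"

definition laplacian_eigenvalue :: "'a set \<Rightarrow> ('a \<Rightarrow> 'a \<Rightarrow> bool) \<Rightarrow> real \<Rightarrow> bool" where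
  "laplacian_eigenvalue V E mu \<longleftrightarrow>
     (\<exists>f. (\<exists>v\<in>V. f v \<noteq> 0) \<and> (\<forall>v\<in>V. norm_laplacian V E f v = mu * f v))"

definition spectral_eps :: "'a set \<Rightarrow> ('a \<Rightarrow> 'a \<Rightarrow> bool) \<Rightarrow> real" where
  "spectral_eps V E = Min {\<bar>1 - mu\<bar> | mu. laplacian_eigenvalue V E mu}"

end

theory Submission
  imports Defs "Jordan_Normal_Form.Char_Poly"
begin

text \<open>
  Write \<open>P = I - \<Delta>\<close> for the random walk operator; it is self-adjoint for the inner product
  \<open>\<langle>f, g\<rangle> = \<Sum>\<^sub>v deg v f(v) g(v)\<close>, and \<open>1 - \<lambda>\<close> runs over its eigenvalues. If \<open>\<epsilon> = 1/2\<close>,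
  all of them have absolute value at least \<open>1/2\<close>, hence \<open>\<parallel>P f\<parallel>\<^sup>2 \<ge> \<parallel>f\<parallel>\<^sup>2 / 4\<close> for every \<open>f\<close>.
  Testing this with \<open>f = \<delta>\<^sub>x\<close> and \<open>f = \<delta>\<^sub>x - \<delta>\<^sub>y\<close> gives two local inequalities:
  \<open>deg x / 4 \<le> \<Sum>\<^bsub>v \<sim> x\<^esub> 1 / deg v\<close>, and the analogous one for a pair of vertices in which the
  common neighbours are counted with weight \<open>-2\<close>.

  A vertex \<open>w\<close> of degree 3 is then excluded by a case analysis on its neighbourhood. If a
  neighbour \<open>a\<close> has degree 2, the forbidden paths force the other neighbours of \<open>w\<close> to have
  degree at least 4; then the vertex inequality at \<open>a\<close> and the pair inequality for \<open>w\<close> and the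
  other neighbour \<open>a'\<close> of \<open>a\<close> give \<open>deg a' \<le> 6\<close> and \<open>deg a' \<ge> 7\<close>. If no
  neighbour has degree 2, the pair inequality forces the degrees of any two neighbours to add
  up to at least 8, and the vertex inequality at \<open>w\<close> then leaves only degrees \<open>4, 4, 4\<close>,
  which the pair inequalities around a neighbour of \<open>w\<close> exclude.
\<close>

lemma linear_coeff_eq_0_if_quadratic_nonneg:
  fixes a c :: real
  assumes nonneg: "\<And>t. 0 \<le> 2 * t * a + t\<^sup>2 * c"
  shows "a = 0"
proof (rule ccontr)
  assume "a \<noteq> 0"
  define M where "M = \<bar>c\<bar> + 1"
  define t where "t = - a / M"
  have "0 < M" "c \<le> M" unfolding M_def by auto
  have "t\<^sup>2 * c \<le> t\<^sup>2 * M" using \<open>c \<le> M\<close> by (simp add: mult_left_mono)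
  moreover have "t\<^sup>2 * M = a\<^sup>2 / M" "2 * t * a = - 2 * (a\<^sup>2 / M)"
    unfolding t_def using \<open>0 < M\<close> by (simp_all add: power2_eq_square field_simps)
  moreover have "0 < a\<^sup>2 / M" using \<open>a \<noteq> 0\<close> \<open>0 < M\<close> by simp
  ultimately show False using nonneg[of t] by linarith
qed

lemma reciprocal_sum_ge_three_quarters:
  fixes p q r :: nat
  assumes "3 \<le> p" "3 \<le> q" "3 \<le> r" "8 \<le> p + q" "8 \<le> p + r" "8 \<le> q + r"
    and "3/4 \<le> 1 / real p + 1 / real q + 1 / real r"
  shows "p = 4 \<and> q = 4 \<and> r = 4"
proof -
  have inv_le: "1 / real n \<le> 1 / real k" if "0 < k" "k \<le> n" for k n :: nat
    using that by (simp add: frac_le)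
  have ge_4: "4 \<le> x" if "3 \<le> x" "8 \<le> x + y" "8 \<le> x + z"
    "3/4 \<le> 1 / real x + 1 / real y + 1 / real z" for x y z :: nat
  proof (rule ccontr)
    assume "\<not> 4 \<le> x"
    then have "x = 3" "5 \<le> y" "5 \<le> z" using that by auto
    then have "1 / real y \<le> 1/5" "1 / real z \<le> 1/5" "1 / real x = 1/3"
      using inv_le[of 5 y] inv_le[of 5 z] by simp_all
    then show False using that(4) by linarith
  qed
  have "4 \<le> p" "4 \<le> q" "4 \<le> r"
    using ge_4[of p q r] ge_4[of q p r] ge_4[of r p q] assms by (simp_all add: ac_simps)
  have le_4: "x \<le> 4" if "4 \<le> x" "4 \<le> y" "4 \<le> z"
    "3/4 \<le> 1 / real x + 1 / real y + 1 / real z" for x y z :: nat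
  proof (rule ccontr)
    assume "\<not> x \<le> 4"
    then have "1 / real x \<le> 1/5" "1 / real y \<le> 1/4" "1 / real z \<le> 1/4"
      using that inv_le[of 5 x] inv_le[of 4 y] inv_le[of 4 z] by simp_all
    then show False using that(4) by linarith
  qed
  show ?thesis
    using le_4[of p q r] le_4[of q p r] le_4[of r p q] \<open>4 \<le> p\<close> \<open>4 \<le> q\<close> \<open>4 \<le> r\<close> assms(7)
    by (simp add: ac_simps)
qed

section \<open>Neighbourhood sums in finite simple graphs\<close>

locale finite_graph =
  fixes V :: "'a set" and E :: "'a \<Rightarrow> 'a \<Rightarrow> bool"
  assumes simple: "simple_graph V E"
begin

abbreviation N :: "'a \<Rightarrow> 'a set" where "N \<equiv> nbrs V E"
abbreviation d :: "'a \<Rightarrow> nat" where "d \<equiv> deg V E"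

lemma finite_V: "finite V"
  using simple by (simp add: simple_graph_def)

lemma adj_in_V: "E u v \<Longrightarrow> u \<in> V \<and> v \<in> V"
  using simple by (simp add: simple_graph_def)

lemma adj_sym: "E u v \<Longrightarrow> E v u"
  using simple by (simp add: simple_graph_def)

lemma adj_commute: "E u v \<longleftrightarrow> E v u"
  using adj_sym by blast

lemma adj_irrefl: "\<not> E v v"
  using simple by (simp add: simple_graph_def)

lemma mem_nbrs_iff: "u \<in> N v \<longleftrightarrow> E v u"
  using adj_in_V by (auto simp: nbrs_def)

lemma nbrs_subset: "N v \<subseteq> V"
  by (auto simp: nbrs_def)

lemma finite_nbrs: "finite (N v)"
  using finite_subset[OF nbrs_subset finite_V] .

lemma nbrs_sym: "u \<in> N v \<Longrightarrow> v \<in> N u"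
  using adj_sym by (simp add: mem_nbrs_iff)

lemma sum_adj_eq_sum_nbrs: "(\<Sum>v\<in>V. if E v x then g v else 0) = (\<Sum>v\<in>N x. g v)"
proof -
  have "N x = {v \<in> V. E v x}" using adj_sym by (auto simp: nbrs_def)
  then show ?thesis using finite_V by (simp add: sum.inter_filter)
qed

lemma sum_common_adj_eq_sum_nbrs:
  "(\<Sum>v\<in>V. if E v x \<and> E v y then g v else 0) = (\<Sum>v\<in>N x \<inter> N y. g v)"
proof -
  have "N x \<inter> N y = {v \<in> V. E v x \<and> E v y}" using adj_sym by (auto simp: nbrs_def)
  then show ?thesis using finite_V by (simp add: sum.inter_filter)
qed

lemma sum_nbrs_swap: "(\<Sum>v\<in>V. \<Sum>u\<in>N v. F v u) = (\<Sum>u\<in>V. \<Sum>v\<in>N u. F v u)"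
proof -
  have "(\<Sum>v\<in>V. \<Sum>u\<in>N v. F v u) = (\<Sum>v\<in>V. \<Sum>u\<in>V. if E v u then F v u else 0)"
    using finite_V by (simp add: nbrs_def sum.inter_filter)
  also have "\<dots> = (\<Sum>u\<in>V. \<Sum>v\<in>V. if E u v then F v u else 0)"
    by (subst sum.swap) (simp only: adj_commute)
  also have "\<dots> = (\<Sum>u\<in>V. \<Sum>v\<in>N u. F v u)"
    using finite_V by (simp add: nbrs_def sum.inter_filter)
  finally show ?thesis .
qed

definition inv_deg :: "'a \<Rightarrow> real" where
  "inv_deg v = 1 / real (d v)"

definition nbr_mass :: "'a \<Rightarrow> real" where
  "nbr_mass x = (\<Sum>v\<in>N x. inv_deg v)"

definition common_mass :: "'a \<Rightarrow> 'a \<Rightarrow> real" where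
  "common_mass x y = (\<Sum>v\<in>N x \<inter> N y. inv_deg v)"

lemma inv_deg_nonneg: "0 \<le> inv_deg v"
  by (simp add: inv_deg_def)

lemma inv_deg_eq: "d v = k \<Longrightarrow> inv_deg v = 1 / real k"
  by (simp add: inv_deg_def)

lemma inv_deg_le: "0 < k \<Longrightarrow> k \<le> d v \<Longrightarrow> inv_deg v \<le> 1 / real k"
  by (simp add: inv_deg_def frac_le)

lemma common_mass_ge: "z \<in> N x \<Longrightarrow> z \<in> N y \<Longrightarrow> inv_deg z \<le> common_mass x y"
  unfolding common_mass_def
  by (rule member_le_sum) (simp_all add: inv_deg_nonneg finite_nbrs)

lemma nbr_mass_le:
  assumes sub: "A \<subseteq> N x" and bound: "\<And>v. v \<in> N x - A \<Longrightarrow> inv_deg v \<le> c"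
  shows "nbr_mass x \<le> (\<Sum>v\<in>A. inv_deg v) + (real (d x) - real (card A)) * c"
proof -
  have "finite A" using finite_subset[OF sub finite_nbrs] .
  have "card A \<le> d x" using card_mono[OF finite_nbrs sub] by (simp add: deg_def)
  have "nbr_mass x = (\<Sum>v\<in>A. inv_deg v) + (\<Sum>v\<in>N x - A. inv_deg v)"
    unfolding nbr_mass_def using sum.subset_diff[OF sub finite_nbrs] by (simp add: add.commute)
  also have "(\<Sum>v\<in>N x - A. inv_deg v) \<le> real (card (N x - A)) * c"
    using sum_bounded_above[of "N x - A" inv_deg c] bound by simp
  also have "card (N x - A) = d x - card A"
    using card_Diff_subset[OF \<open>finite A\<close> sub] by (simp add: deg_def)
  finally show ?thesis using \<open>card A \<le> d x\<close> by (simp add: of_nat_diff)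
qed

lemma deg_2_nbrs:
  assumes "d y = 2" "z \<in> N y"
  obtains y' where "N y = {z, y'}" "y' \<noteq> z" "nbr_mass y = inv_deg z + inv_deg y'"
proof -
  have "card (N y - {z}) = 1" using assms finite_nbrs by (simp add: deg_def)
  then obtain y' where y': "N y - {z} = {y'}" by (meson card_1_singletonE)
  then have "N y = {z, y'}" "y' \<noteq> z" using assms(2) by auto
  then show ?thesis using that by (simp add: nbr_mass_def)
qed

lemma deg_3_nbrs:
  assumes "d x = 3" "z \<in> N x"
  obtains p q where "N x = {z, p, q}" "p \<noteq> z" "q \<noteq> z" "p \<noteq> q"
    "nbr_mass x = inv_deg z + inv_deg p + inv_deg q"
proof -
  have "card (N x - {z}) = 2" using assms finite_nbrs by (simp add: deg_def)
  then obtain p q where pq: "N x - {z} = {p, q}" "p \<noteq> q" by (meson card_2_iff)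
  then have "N x = {z, p, q}" "p \<noteq> z" "q \<noteq> z" using assms(2) by auto
  then show ?thesis using that pq(2) by (simp add: nbr_mass_def)
qed

definition laplacian_mat :: "(nat \<Rightarrow> 'a) \<Rightarrow> nat \<Rightarrow> real mat" where
  "laplacian_mat e n = Matrix.mat n n (\<lambda>(i, j).
     (if i = j then 1 else 0) - (if E (e i) (e j) then 1 / real (d (e i)) else 0))"

lemma laplacian_mat_mult_vec:
  assumes e: "bij_betw e {0..<n} V" and i: "i < n"
  shows "vec_index (laplacian_mat e n *\<^sub>v Matrix.vec n (\<lambda>j. f (e j))) i
    = norm_laplacian V E f (e i)"
proof -
  have "vec_index (laplacian_mat e n *\<^sub>v Matrix.vec n (\<lambda>j. f (e j))) i
      = (\<Sum>j = 0..<n. (if i = j then f (e j) else 0)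
          - 1 / real (d (e i)) * (if E (e i) (e j) then f (e j) else 0))"
    using i adj_irrefl by (simp add: laplacian_mat_def scalar_prod_def, intro sum.cong) auto
  also have "\<dots> = f (e i)
      - 1 / real (d (e i)) * (\<Sum>j = 0..<n. if E (e i) (e j) then f (e j) else 0)"
    using i by (simp add: sum_subtractf sum_distrib_left)
  also have "(\<Sum>j = 0..<n. if E (e i) (e j) then f (e j) else 0)
      = (\<Sum>u\<in>V. if E (e i) u then f u else 0)"
    using sum.reindex_bij_betw[OF e, of "\<lambda>u. if E (e i) u then f u else 0"] by simp
  also have "\<dots> = (\<Sum>u\<in>N (e i). f u)"
    using finite_V by (simp add: nbrs_def sum.inter_filter)
  finally show ?thesis by (simp add: norm_laplacian_def)
qed

lemma finite_laplacian_eigenvalues: "finite {\<mu>. laplacian_eigenvalue V E \<mu>}"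
proof -
  define n where "n = card V"
  obtain e where e: "bij_betw e {0..<n} V"
    using ex_bij_betw_nat_finite[OF finite_V] n_def by blast
  define L where "L = laplacian_mat e n"
  have L: "L \<in> carrier_mat n n" by (simp add: L_def laplacian_mat_def)
  have "eigenvalue L \<mu>" if ev: "laplacian_eigenvalue V E \<mu>" for \<mu>
  proof -
    obtain f v where eig: "\<And>v. v \<in> V \<Longrightarrow> norm_laplacian V E f v = \<mu> * f v"
      and "v \<in> V" "f v \<noteq> 0"
      using ev unfolding laplacian_eigenvalue_def by blast
    define x where "x = Matrix.vec n (\<lambda>j. f (e j))"
    obtain i where "i < n" "e i = v" using e \<open>v \<in> V\<close> by (auto simp: bij_betw_def)
    then have "x \<noteq> 0\<^sub>v n"
      using \<open>f v \<noteq> 0\<close> by (auto simp: x_def dest: arg_cong[where f = "\<lambda>y. vec_index y i"])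
    moreover have "L *\<^sub>v x = \<mu> \<cdot>\<^sub>v x"
    proof (rule eq_vecI)
      fix j assume "j < dim_vec (\<mu> \<cdot>\<^sub>v x)"
      then have "j < n" "e j \<in> V" using e by (auto simp: x_def bij_betw_def)
      then show "vec_index (L *\<^sub>v x) j = vec_index (\<mu> \<cdot>\<^sub>v x) j"
        using laplacian_mat_mult_vec[OF e] eig by (simp add: L_def x_def)
    qed (simp add: L_def laplacian_mat_def x_def)
    moreover have "x \<in> carrier_vec n" by (simp add: x_def)
    ultimately show ?thesis using L unfolding eigenvalue_def eigenvector_def by blast
  qed
  then have "{\<mu>. laplacian_eigenvalue V E \<mu>} \<subseteq> {x. poly (char_poly L) x = 0}"
    using eigenvalue_root_char_poly[OF L] by blast
  moreover have "char_poly L \<noteq> 0" using degree_monic_char_poly[OF L] by auto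
  ultimately show ?thesis using poly_roots_finite finite_subset by blast
qed

lemma finite_eigenvalue_distances: "finite {\<bar>1 - \<mu>\<bar> | \<mu>. laplacian_eigenvalue V E \<mu>}"
  using finite_image_set[OF finite_laplacian_eigenvalues] .

lemma spectral_eps_le: "laplacian_eigenvalue V E \<mu> \<Longrightarrow> spectral_eps V E \<le> \<bar>1 - \<mu>\<bar>"
  unfolding spectral_eps_def by (rule Min_le[OF finite_eigenvalue_distances]) blast

lemma spectral_eps_nonneg: "laplacian_eigenvalue V E \<mu> \<Longrightarrow> 0 \<le> spectral_eps V E"
  using Min_in[OF finite_eigenvalue_distances] unfolding spectral_eps_def by fastforce

end

section \<open>The Rayleigh bound for the random walk operator\<close>

locale graph_no_isolated = finite_graph +
  assumes deg_pos: "v \<in> V \<Longrightarrow> 0 < deg V E v"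
begin

definition walk :: "('a \<Rightarrow> real) \<Rightarrow> 'a \<Rightarrow> real" where
  "walk f v = (\<Sum>u\<in>N v. f u) / real (d v)"

definition deg_inner :: "('a \<Rightarrow> real) \<Rightarrow> ('a \<Rightarrow> real) \<Rightarrow> real" where
  "deg_inner f g = (\<Sum>v\<in>V. real (d v) * f v * g v)"

definition deg_norm2 :: "('a \<Rightarrow> real) \<Rightarrow> real" where
  "deg_norm2 f = deg_inner f f"

lemma norm_laplacian_eq_walk: "norm_laplacian V E f v = f v - walk f v"
  by (simp add: norm_laplacian_def walk_def)

lemma walk_add_scaled: "walk (\<lambda>u. f u + t * g u) = (\<lambda>v. walk f v + t * walk g v)"
  by (simp add: fun_eq_iff walk_def sum.distrib sum_distrib_left add_divide_distrib)

lemma walk_scaled: "walk (\<lambda>u. c * f u) = (\<lambda>v. c * walk f v)"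
  by (simp add: fun_eq_iff walk_def sum_distrib_left)

lemma walk_cong: "(\<And>u. u \<in> V \<Longrightarrow> f u = g u) \<Longrightarrow> walk f = walk g"
  using nbrs_subset by (auto simp: fun_eq_iff walk_def intro!: sum.cong)

lemma deg_inner_commute: "deg_inner f g = deg_inner g f"
  by (simp add: deg_inner_def algebra_simps)

lemma deg_inner_diff_left: "deg_inner (\<lambda>v. f v - c * g v) h = deg_inner f h - c * deg_inner g h"
  by (simp add: deg_inner_def sum_subtractf sum_distrib_left algebra_simps)

lemma deg_norm2_add_scaled:
  "deg_norm2 (\<lambda>u. f u + t * g u) = deg_norm2 f + 2 * t * deg_inner f g + t\<^sup>2 * deg_norm2 g"
  by (simp add: deg_norm2_def deg_inner_def power2_eq_square sum.distrib sum_distrib_left algebra_simps)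

lemma deg_norm2_scaled: "deg_norm2 (\<lambda>u. c * f u) = c\<^sup>2 * deg_norm2 f"
  by (simp add: deg_norm2_def deg_inner_def power2_eq_square sum_distrib_left algebra_simps)

lemma deg_norm2_term_le: "v \<in> V \<Longrightarrow> real (d v) * (f v)\<^sup>2 \<le> deg_norm2 f"
  unfolding deg_norm2_def deg_inner_def power2_eq_square mult.assoc
  by (rule member_le_sum) (simp_all add: finite_V)

lemma deg_norm2_nonneg: "0 \<le> deg_norm2 f"
  unfolding deg_norm2_def deg_inner_def mult.assoc by (simp add: sum_nonneg)

lemma deg_norm2_eq_0D:
  assumes "deg_norm2 f = 0" "v \<in> V"
  shows "f v = 0"
  using deg_norm2_term_le[OF assms(2), of f] assms deg_pos[OF assms(2)]
  by (simp add: mult_le_0_iff)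

lemma deg_norm2_indicator:
  assumes "x \<in> V"
  shows "deg_norm2 (\<lambda>u. if u = x then c else 0) = c\<^sup>2 * real (d x)"
proof -
  have "deg_norm2 (\<lambda>u. if u = x then c else 0) = (\<Sum>v\<in>V. if v = x then c\<^sup>2 * real (d x) else 0)"
    unfolding deg_norm2_def deg_inner_def by (rule sum.cong) (auto simp: power2_eq_square)
  then show ?thesis using assms finite_V by simp
qed

lemma deg_inner_walk_left: "deg_inner (walk f) g = (\<Sum>v\<in>V. \<Sum>u\<in>N v. f u * g v)"
  unfolding deg_inner_def walk_def
  by (rule sum.cong) (use deg_pos in \<open>auto simp: sum_distrib_right\<close>)

lemma deg_inner_walk_sym: "deg_inner (walk f) g = deg_inner f (walk g)"
  using sum_nbrs_swap[of "\<lambda>v u. g u * f v"]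
  by (simp add: deg_inner_commute[of f] deg_inner_walk_left mult.commute)

lemma continuous_deg_norm2:
  "continuous_map (product_topology (\<lambda>_. euclideanreal) V) euclideanreal deg_norm2"
  unfolding deg_norm2_def[abs_def] deg_inner_def
  by (intro continuous_intros finite_V)

lemma continuous_walk:
  assumes "v \<in> V"
  shows "continuous_map (product_topology (\<lambda>_. euclideanreal) V) euclideanreal (\<lambda>f. walk f v)"
  unfolding walk_def
proof (intro continuous_map_real_divide continuous_map_sum continuous_map_canonical_const finite_nbrs)
  show "continuous_map (product_topology (\<lambda>_. euclideanreal) V) euclideanreal (\<lambda>f. f u)"
    if "u \<in> N v" for u
    using continuous_map_product_projection[of u V "\<lambda>_. euclideanreal"] that nbrs_subset by auto
qed (use deg_pos[OF assms] in simp)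

lemma continuous_deg_norm2_walk:
  "continuous_map (product_topology (\<lambda>_. euclideanreal) V) euclideanreal (\<lambda>f. deg_norm2 (walk f))"
  unfolding deg_norm2_def deg_inner_def
proof (rule continuous_map_sum[OF finite_V])
  fix v assume "v \<in> V"
  note walk_v = continuous_walk[OF this]
  show "continuous_map (product_topology (\<lambda>_. euclideanreal) V) euclideanreal
      (\<lambda>f. real (d v) * walk f v * walk f v)"
    by (rule continuous_map_real_mult[OF continuous_map_real_mult[OF
          continuous_map_canonical_const walk_v] walk_v])
qed

lemma unit_sphere_minimizer:
  assumes "V \<noteq> {}"
  shows "\<exists>\<phi>. deg_norm2 \<phi> = 1
    \<and> (\<forall>\<psi>. deg_norm2 \<psi> = 1 \<longrightarrow> deg_norm2 (walk \<phi>) \<le> deg_norm2 (walk \<psi>))"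
proof -
  define X where "X = product_topology (\<lambda>_::'a. euclideanreal) V"
  define K where "K = PiE V (\<lambda>_. {-1..1::real}) \<inter> {f \<in> topspace X. deg_norm2 f \<in> {1}}"
  have "compactin X K"
    unfolding K_def X_def
    by (intro compact_Int_closedin closedin_continuous_map_preimage[OF continuous_deg_norm2])
      (simp_all add: compactin_PiE)
  then have "compactin euclideanreal ((\<lambda>f. deg_norm2 (walk f)) ` K)"
    using continuous_deg_norm2_walk unfolding X_def by (rule image_compactin)
  then have compact: "compact ((\<lambda>f. deg_norm2 (walk f)) ` K)" by simp
  have restrict_in_K: "restrict \<psi> V \<in> K" if "deg_norm2 \<psi> = 1" for \<psi>
  proof -
    have "\<bar>\<psi> v\<bar> \<le> 1" if "v \<in> V" for v
    proof -
      have "1 * (\<psi> v)\<^sup>2 \<le> real (d v) * (\<psi> v)\<^sup>2"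
        using deg_pos[OF that] by (intro mult_right_mono) auto
      also have "\<dots> \<le> 1" using deg_norm2_term_le[OF that, of \<psi>] \<open>deg_norm2 \<psi> = 1\<close> by simp
      finally show ?thesis by (simp add: abs_square_le_1)
    qed
    moreover have "deg_norm2 (restrict \<psi> V) = deg_norm2 \<psi>"
      by (simp add: deg_norm2_def deg_inner_def)
    ultimately show ?thesis
      using that by (auto simp: K_def X_def topspace_product_topology abs_le_iff)
  qed
  obtain v where "v \<in> V" using assms by blast
  have "deg_norm2 (\<lambda>u. if u = v then sqrt (1 / real (d v)) else 0)
      = (sqrt (1 / real (d v)))\<^sup>2 * real (d v)"
    by (rule deg_norm2_indicator[OF \<open>v \<in> V\<close>])
  also have "\<dots> = 1" using deg_pos[OF \<open>v \<in> V\<close>] by simp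
  finally have "(\<lambda>f. deg_norm2 (walk f)) ` K \<noteq> {}" using restrict_in_K by blast
  from compact_attains_inf[OF compact this] obtain \<phi>
    where "\<phi> \<in> K" and min: "\<And>\<psi>. \<psi> \<in> K \<Longrightarrow> deg_norm2 (walk \<phi>) \<le> deg_norm2 (walk \<psi>)"
    by auto
  show ?thesis
  proof (intro exI conjI allI impI)
    show "deg_norm2 \<phi> = 1" using \<open>\<phi> \<in> K\<close> by (simp add: K_def)
    fix \<psi> assume "deg_norm2 \<psi> = 1"
    then have "deg_norm2 (walk \<phi>) \<le> deg_norm2 (walk (restrict \<psi> V))"
      using min restrict_in_K by blast
    also have "walk (restrict \<psi> V) = walk \<psi>" by (rule walk_cong) simp
    finally show "deg_norm2 (walk \<phi>) \<le> deg_norm2 (walk \<psi>)" .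
  qed
qed

lemma rayleigh_minimizer:
  assumes "V \<noteq> {}"
  shows "\<exists>\<phi>. deg_norm2 \<phi> = 1 \<and> (\<forall>g. deg_norm2 (walk \<phi>) * deg_norm2 g \<le> deg_norm2 (walk g))"
proof -
  obtain \<phi> where \<phi>: "deg_norm2 \<phi> = 1"
    and min: "\<And>\<psi>. deg_norm2 \<psi> = 1 \<Longrightarrow> deg_norm2 (walk \<phi>) \<le> deg_norm2 (walk \<psi>)"
    using unit_sphere_minimizer[OF assms] by blast
  have "deg_norm2 (walk \<phi>) * deg_norm2 g \<le> deg_norm2 (walk g)" for g
  proof (cases "deg_norm2 g = 0")
    case True
    then show ?thesis using deg_norm2_nonneg by simp
  next
    case False
    then have pos: "0 < deg_norm2 g" using deg_norm2_nonneg[of g] by simp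
    define c where "c = 1 / sqrt (deg_norm2 g)"
    have "c\<^sup>2 * deg_norm2 g = 1" using pos by (simp add: c_def power_divide)
    then have "deg_norm2 (walk \<phi>) \<le> deg_norm2 (walk (\<lambda>u. c * g u))"
      by (intro min) (simp add: deg_norm2_scaled)
    also have "\<dots> = c\<^sup>2 * deg_norm2 (walk g)" by (simp add: walk_scaled deg_norm2_scaled)
    also have "\<dots> = deg_norm2 (walk g) / deg_norm2 g" using pos by (simp add: c_def power_divide)
    finally show ?thesis using pos by (simp add: field_simps)
  qed
  with \<phi> show ?thesis by blast
qed

text \<open>The first variation of \<open>\<parallel>P f\<parallel>\<^sup>2 / \<parallel>f\<parallel>\<^sup>2\<close> vanishes at a minimiser; this replaces
  the spectral theorem.\<close>

lemma rayleigh_minimizer_walk_square: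
  assumes \<phi>: "deg_norm2 \<phi> = 1" and min: "\<And>g. deg_norm2 (walk \<phi>) * deg_norm2 g \<le> deg_norm2 (walk g)"
    and "v \<in> V"
  shows "walk (walk \<phi>) v = deg_norm2 (walk \<phi>) * \<phi> v"
proof -
  define q where "q = deg_norm2 (walk \<phi>)"
  define h where "h = (\<lambda>v. walk (walk \<phi>) v - q * \<phi> v)"
  have cross: "deg_inner (walk \<phi>) (walk h) = deg_norm2 h + q * deg_inner \<phi> h"
  proof -
    have "deg_norm2 h = deg_inner (walk (walk \<phi>)) h - q * deg_inner \<phi> h"
      unfolding deg_norm2_def h_def by (rule deg_inner_diff_left)
    then show ?thesis by (simp add: deg_inner_walk_sym)
  qed
  have "0 \<le> 2 * t * deg_norm2 h + t\<^sup>2 * (deg_norm2 (walk h) - q * deg_norm2 h)" for t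
  proof -
    have "q * deg_norm2 (\<lambda>u. \<phi> u + t * h u) \<le> deg_norm2 (walk (\<lambda>u. \<phi> u + t * h u))"
      unfolding q_def by (rule min)
    then have "q * (1 + 2 * t * deg_inner \<phi> h + t\<^sup>2 * deg_norm2 h)
        \<le> q + 2 * t * deg_inner (walk \<phi>) (walk h) + t\<^sup>2 * deg_norm2 (walk h)"
      by (simp add: walk_add_scaled deg_norm2_add_scaled \<phi> q_def)
    moreover have "2 * t * deg_norm2 h + t\<^sup>2 * (deg_norm2 (walk h) - q * deg_norm2 h)
        = (q + 2 * t * deg_inner (walk \<phi>) (walk h) + t\<^sup>2 * deg_norm2 (walk h))
          - q * (1 + 2 * t * deg_inner \<phi> h + t\<^sup>2 * deg_norm2 h)"
      by (simp add: cross algebra_simps)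
    ultimately show ?thesis by linarith
  qed
  then have "deg_norm2 h = 0" by (rule linear_coeff_eq_0_if_quadratic_nonneg)
  then show ?thesis using deg_norm2_eq_0D[of h v] \<open>v \<in> V\<close> by (simp add: h_def q_def)
qed

text \<open>Since \<open>P\<^sup>2 - r\<^sup>2 = (P - r)(P + r)\<close>, either \<open>P\<phi> + r\<phi>\<close> is an eigenfunction of \<open>P\<close> for
  \<open>r\<close>, or \<open>\<phi>\<close> is one for \<open>-r\<close>.\<close>

lemma laplacian_eigenvalue_of_walk_square:
  assumes nonzero: "\<exists>v\<in>V. \<phi> v \<noteq> 0" and "0 \<le> r"
    and square: "\<And>v. v \<in> V \<Longrightarrow> walk (walk \<phi>) v = r\<^sup>2 * \<phi> v"
  shows "\<exists>\<mu>. laplacian_eigenvalue V E \<mu> \<and> \<bar>1 - \<mu>\<bar> = r"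
proof (cases "\<exists>v\<in>V. walk \<phi> v + r * \<phi> v \<noteq> 0")
  case True
  define g where "g = (\<lambda>u. walk \<phi> u + r * \<phi> u)"
  have "norm_laplacian V E g v = (1 - r) * g v" if "v \<in> V" for v
  proof -
    have "walk g v = r * g v"
      unfolding g_def walk_add_scaled using square[OF that] by (simp add: power2_eq_square algebra_simps)
    then show ?thesis by (simp add: norm_laplacian_eq_walk left_diff_distrib)
  qed
  moreover have "\<exists>v\<in>V. g v \<noteq> 0" using True by (simp add: g_def)
  ultimately have "laplacian_eigenvalue V E (1 - r)"
    unfolding laplacian_eigenvalue_def by blast
  then show ?thesis using \<open>0 \<le> r\<close> by auto
next
  case False
  have "norm_laplacian V E \<phi> v = (1 + r) * \<phi> v" if "v \<in> V" for v
  proof -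
    have "walk \<phi> v = - (r * \<phi> v)" using False that by (simp add: eq_neg_iff_add_eq_0)
    then show ?thesis by (simp add: norm_laplacian_eq_walk distrib_right)
  qed
  then have "laplacian_eigenvalue V E (1 + r)"
    unfolding laplacian_eigenvalue_def using nonzero by blast
  then show ?thesis using \<open>0 \<le> r\<close> by auto
qed

lemma spectral_eps_rayleigh:
  assumes "V \<noteq> {}"
  shows "(spectral_eps V E)\<^sup>2 * deg_norm2 f \<le> deg_norm2 (walk f)"
proof -
  obtain \<phi> where \<phi>: "deg_norm2 \<phi> = 1" and min: "\<And>g. deg_norm2 (walk \<phi>) * deg_norm2 g \<le> deg_norm2 (walk g)"
    using rayleigh_minimizer[OF assms] by blast
  define r where "r = sqrt (deg_norm2 (walk \<phi>))"
  have "0 \<le> r" unfolding r_def by (rule real_sqrt_ge_zero[OF deg_norm2_nonneg])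
  have r2: "r\<^sup>2 = deg_norm2 (walk \<phi>)" unfolding r_def by (rule real_sqrt_pow2[OF deg_norm2_nonneg])
  have nonzero: "\<exists>v\<in>V. \<phi> v \<noteq> 0"
  proof (rule ccontr)
    assume "\<not> (\<exists>v\<in>V. \<phi> v \<noteq> 0)"
    then have "deg_norm2 \<phi> = 0" unfolding deg_norm2_def deg_inner_def by (intro sum.neutral) simp
    with \<phi> show False by simp
  qed
  have "walk (walk \<phi>) v = r\<^sup>2 * \<phi> v" if "v \<in> V" for v
    unfolding r2 by (rule rayleigh_minimizer_walk_square[OF \<phi> min that])
  then obtain \<mu> where "laplacian_eigenvalue V E \<mu>" "\<bar>1 - \<mu>\<bar> = r"
    using laplacian_eigenvalue_of_walk_square[OF nonzero \<open>0 \<le> r\<close>] by blast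
  then have "0 \<le> spectral_eps V E" "spectral_eps V E \<le> r"
    using spectral_eps_nonneg spectral_eps_le by auto
  then have "(spectral_eps V E)\<^sup>2 \<le> r\<^sup>2" by (intro power_mono)
  then have "(spectral_eps V E)\<^sup>2 * deg_norm2 f \<le> deg_norm2 (walk \<phi>) * deg_norm2 f"
    unfolding r2 by (rule mult_right_mono) (rule deg_norm2_nonneg)
  also have "\<dots> \<le> deg_norm2 (walk f)" by (rule min)
  finally show ?thesis .
qed

lemma walk_indicator_diff:
  "walk (\<lambda>u. (if u = x then 1 else 0) - (if u = y then 1 else 0)) v
    = (if E v x then inv_deg v else 0) - (if E v y then inv_deg v else 0)"
proof -
  have "(\<Sum>u\<in>N v. (if u = x then 1 else 0) - (if u = y then 1 else 0))
      = (if E v x then 1 else 0) - (if E v y then (1::real) else 0)"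
    using finite_nbrs by (simp add: sum_subtractf mem_nbrs_iff)
  then show ?thesis by (cases "E v x"; cases "E v y") (simp_all add: walk_def inv_deg_def)
qed

lemma walk_indicator: "walk (\<lambda>u. if u = x then 1 else 0) v = (if E v x then inv_deg v else 0)"
proof -
  have "(\<Sum>u\<in>N v. if u = x then 1 else 0) = (if E v x then 1 else (0::real))"
    using finite_nbrs by (simp add: mem_nbrs_iff)
  then show ?thesis by (cases "E v x") (simp_all add: walk_def inv_deg_def)
qed

lemma deg_norm2_indicator_diff:
  assumes "x \<in> V" "y \<in> V" "x \<noteq> y"
  shows "deg_norm2 (\<lambda>u. (if u = x then 1 else 0) - (if u = y then 1 else 0)) = real (d x) + real (d y)"
proof -
  have "deg_norm2 (\<lambda>u. (if u = x then 1 else 0) - (if u = y then 1 else 0))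
      = (\<Sum>v\<in>V. (if v = x then real (d x) else 0) + (if v = y then real (d y) else 0))"
    unfolding deg_norm2_def deg_inner_def by (rule sum.cong) (use assms in auto)
  then show ?thesis using assms finite_V by (simp add: sum.distrib)
qed

lemma deg_norm2_walk_indicator: "deg_norm2 (walk (\<lambda>u. if u = x then 1 else 0)) = nbr_mass x"
proof -
  have "deg_norm2 (walk (\<lambda>u. if u = x then 1 else 0)) = (\<Sum>v\<in>V. if E v x then inv_deg v else 0)"
    unfolding deg_norm2_def deg_inner_def walk_indicator
  proof (rule sum.cong)
    fix v assume "v \<in> V"
    then have "real (d v) \<noteq> 0" using deg_pos by simp
    then show "real (d v) * (if E v x then inv_deg v else 0) * (if E v x then inv_deg v else 0)
      = (if E v x then inv_deg v else 0)"
      by (simp add: inv_deg_def)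
  qed simp
  then show ?thesis unfolding sum_adj_eq_sum_nbrs nbr_mass_def .
qed

lemma deg_norm2_walk_indicator_diff:
  "deg_norm2 (walk (\<lambda>u. (if u = x then 1 else 0) - (if u = y then 1 else 0)))
    = nbr_mass x + nbr_mass y - 2 * common_mass x y"
proof -
  have "deg_norm2 (walk (\<lambda>u. (if u = x then 1 else 0) - (if u = y then 1 else 0)))
      = (\<Sum>v\<in>V. (if E v x then inv_deg v else 0) + (if E v y then inv_deg v else 0)
          - 2 * (if E v x \<and> E v y then inv_deg v else 0))"
    unfolding deg_norm2_def deg_inner_def walk_indicator_diff
  proof (rule sum.cong)
    fix v assume "v \<in> V"
    then have "real (d v) \<noteq> 0" using deg_pos by simp
    then show "real (d v) * ((if E v x then inv_deg v else 0) - (if E v y then inv_deg v else 0))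
        * ((if E v x then inv_deg v else 0) - (if E v y then inv_deg v else 0))
      = (if E v x then inv_deg v else 0) + (if E v y then inv_deg v else 0)
        - 2 * (if E v x \<and> E v y then inv_deg v else 0)"
      by (simp add: inv_deg_def)
  qed simp
  also have "\<dots> = (\<Sum>v\<in>V. if E v x then inv_deg v else 0) + (\<Sum>v\<in>V. if E v y then inv_deg v else 0)
      - 2 * (\<Sum>v\<in>V. if E v x \<and> E v y then inv_deg v else 0)"
    by (simp only: sum.distrib sum_subtractf sum_distrib_left)
  finally show ?thesis
    unfolding sum_adj_eq_sum_nbrs sum_common_adj_eq_sum_nbrs nbr_mass_def common_mass_def .
qed

lemma spectral_eps_vertex_bound:
  assumes "x \<in> V"
  shows "(spectral_eps V E)\<^sup>2 * real (d x) \<le> nbr_mass x"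
proof -
  have "V \<noteq> {}" using assms by blast
  from spectral_eps_rayleigh[OF this, of "\<lambda>u. if u = x then 1 else 0"] show ?thesis
    by (simp only: deg_norm2_indicator[OF assms] deg_norm2_walk_indicator power_one mult_1)
qed

lemma spectral_eps_pair_bound:
  assumes "x \<in> V" "y \<in> V" "x \<noteq> y"
  shows "(spectral_eps V E)\<^sup>2 * (real (d x) + real (d y))
    \<le> nbr_mass x + nbr_mass y - 2 * common_mass x y"
proof -
  have "V \<noteq> {}" using assms by blast
  from spectral_eps_rayleigh[OF this, of "\<lambda>u. (if u = x then 1 else 0) - (if u = y then 1 else 0)"]
  show ?thesis by (simp only: deg_norm2_indicator_diff[OF assms] deg_norm2_walk_indicator_diff)
qed

end

section \<open>Excluding vertices of degree three\<close>

locale eps_half_graph = finite_graph +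
  assumes deg_ge_2: "v \<in> V \<Longrightarrow> 2 \<le> deg V E v"
    and eps_half: "spectral_eps V E = 1/2"
    and no_deg2_path: "\<And>u v w. E u v \<Longrightarrow> E v w \<Longrightarrow> u \<noteq> w \<Longrightarrow> deg V E u = 2
      \<Longrightarrow> deg V E v = 2 \<Longrightarrow> deg V E w \<in> {2, 3} \<Longrightarrow> False"

sublocale eps_half_graph \<subseteq> graph_no_isolated
proof
  fix v assume "v \<in> V"
  then show "0 < deg V E v" using deg_ge_2[of v] by simp
qed

context eps_half_graph
begin

lemma vertex_bound: "x \<in> V \<Longrightarrow> real (d x) / 4 \<le> nbr_mass x"
  using spectral_eps_vertex_bound[of x] by (simp add: eps_half power2_eq_square)

lemma pair_bound:
  "x \<in> V \<Longrightarrow> y \<in> V \<Longrightarrow> x \<noteq> y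
    \<Longrightarrow> (real (d x) + real (d y)) / 4 \<le> nbr_mass x + nbr_mass y - 2 * common_mass x y"
  using spectral_eps_pair_bound[of x y] by (simp add: eps_half power2_eq_square)

lemma inv_deg_le_half: "v \<in> V \<Longrightarrow> inv_deg v \<le> 1/2"
  using inv_deg_le[of 2 v] deg_ge_2[of v] by simp

lemma inv_deg_le_third: "v \<in> V \<Longrightarrow> d v \<noteq> 2 \<Longrightarrow> inv_deg v \<le> 1/3"
  using inv_deg_le[of 3 v] deg_ge_2[of v] by simp

lemma deg_eq_2_if_inv_deg_gt_third: "v \<in> V \<Longrightarrow> 1/3 < inv_deg v \<Longrightarrow> d v = 2"
  using inv_deg_le_third[of v] by linarith

lemma nbr_of_deg2_pair_has_deg_2:
  assumes "x \<in> N z" "y \<in> N z" "x \<noteq> y" "d x = 2" "d y = 2" "x' \<in> N x" "x' \<noteq> z"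
  shows "d x' = 2"
proof -
  obtain x'' where "N x = {z, x''}" and mass_x: "nbr_mass x = inv_deg z + inv_deg x''"
    using deg_2_nbrs[OF \<open>d x = 2\<close> nbrs_sym[OF \<open>x \<in> N z\<close>]] by blast
  then have "x'' = x'" using assms(6,7) by auto
  obtain y' where "N y = {z, y'}" and mass_y: "nbr_mass y = inv_deg z + inv_deg y'"
    using deg_2_nbrs[OF \<open>d y = 2\<close> nbrs_sym[OF \<open>y \<in> N z\<close>]] by blast
  have "inv_deg y' \<le> 1/2" using \<open>N y = {z, y'}\<close> nbrs_subset inv_deg_le_half by blast
  have "inv_deg z \<le> common_mass x y" using common_mass_ge nbrs_sym assms(1,2) by blast
  have "x \<in> V" "y \<in> V" using assms(1,2) nbrs_subset by blast+
  then have "1 \<le> nbr_mass x + nbr_mass y - 2 * common_mass x y"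
    using pair_bound \<open>x \<noteq> y\<close> assms(4,5) by fastforce
  then have "1/3 < inv_deg x'"
    using mass_x[unfolded \<open>x'' = x'\<close>] mass_y \<open>inv_deg y' \<le> 1/2\<close> \<open>inv_deg z \<le> common_mass x y\<close>
    by linarith
  then show ?thesis using deg_eq_2_if_inv_deg_gt_third assms(6) nbrs_subset by blast
qed

lemma no_two_deg2_nbrs:
  assumes "d z \<in> {2, 3}" "x \<in> N z" "y \<in> N z" "x \<noteq> y" "d x = 2" "d y = 2"
  shows False
proof -
  obtain x' where "N x = {z, x'}" "x' \<noteq> z"
    using deg_2_nbrs[OF \<open>d x = 2\<close> nbrs_sym[OF \<open>x \<in> N z\<close>]] by blast
  then have "x' \<in> N x" by simp
  then have "d x' = 2" using nbr_of_deg2_pair_has_deg_2 assms \<open>x' \<noteq> z\<close> by blast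
  moreover have "E x' x" "E x z" using \<open>x' \<in> N x\<close> \<open>x \<in> N z\<close> by (simp_all add: mem_nbrs_iff adj_commute)
  ultimately show False using no_deg2_path \<open>x' \<noteq> z\<close> assms(1,5) by blast
qed

context
  fixes w a b c
  assumes deg_w: "d w = 3" and nbrs_w: "N w = {a, b, c}"
    and distinct: "a \<noteq> b" "a \<noteq> c" "b \<noteq> c"
begin

lemma w_in_V: "w \<in> V"
proof -
  have "E w a" using nbrs_w mem_nbrs_iff by blast
  then show ?thesis using adj_in_V by blast
qed

lemma nbr_mass_w: "nbr_mass w = inv_deg a + inv_deg b + inv_deg c"
  using distinct by (simp add: nbr_mass_def nbrs_w)

context
  fixes a'
  assumes deg_a: "d a = 2" and nbrs_a: "N a = {w, a'}" and "a' \<noteq> w"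
begin

lemma far_nbr_in_V: "a' \<in> V"
  using nbrs_a nbrs_subset by blast

lemma far_nbr_deg_ne_2: "d a' \<noteq> 2"
proof
  assume "d a' = 2"
  have "E a' a" "E a w" using nbrs_a by (auto simp: mem_nbrs_iff adj_commute)
  then show False using no_deg2_path[of a' a w] \<open>d a' = 2\<close> deg_a deg_w \<open>a' \<noteq> w\<close> by simp
qed

lemma nbr_mass_deg2_nbr: "nbr_mass a = 1/3 + inv_deg a'"
  using nbrs_a \<open>a' \<noteq> w\<close> by (simp add: nbr_mass_def inv_deg_eq[OF deg_w])

lemma other_nbrs_deg_ge_4:
  assumes x: "x \<in> N w" "x \<noteq> a"
  shows "4 \<le> d x"
proof -
  have "x \<in> V" using x nbrs_subset by blast
  have "d x \<noteq> 2" using no_two_deg2_nbrs[of w a x] deg_w nbrs_w deg_a x by auto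
  moreover have "d x \<noteq> 3"
  proof
    assume "d x = 3"
    obtain p q where "N x = {w, p, q}" "p \<noteq> q"
      and mass_x: "nbr_mass x = inv_deg w + inv_deg p + inv_deg q"
      using deg_3_nbrs[OF \<open>d x = 3\<close> nbrs_sym[OF x(1)]] by blast
    have "p \<in> V" "q \<in> V" using \<open>N x = {w, p, q}\<close> nbrs_subset by blast+
    have "inv_deg w \<le> common_mass a x"
      using common_mass_ge nbrs_sym nbrs_w x(1) by (simp add: nbrs_a)
    moreover have "(real (d a) + real (d x)) / 4 \<le> nbr_mass a + nbr_mass x - 2 * common_mass a x"
      using pair_bound far_nbr_in_V nbrs_w \<open>x \<in> V\<close> x(2) nbrs_subset by blast
    moreover have "inv_deg a' \<le> 1/3" using inv_deg_le_third far_nbr_in_V far_nbr_deg_ne_2 by blast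
    moreover have "inv_deg p \<le> 1/2" "inv_deg q \<le> 1/2" using \<open>p \<in> V\<close> \<open>q \<in> V\<close> inv_deg_le_half by blast+
    ultimately have "1/3 < inv_deg p" "1/3 < inv_deg q"
      using deg_a \<open>d x = 3\<close> mass_x nbr_mass_deg2_nbr inv_deg_eq[OF deg_w] by simp_all
    then have "d p = 2" "d q = 2" using deg_eq_2_if_inv_deg_gt_third \<open>p \<in> V\<close> \<open>q \<in> V\<close> by blast+
    then show False
      using no_two_deg2_nbrs[of x p q] \<open>d x = 3\<close> \<open>N x = {w, p, q}\<close> \<open>p \<noteq> q\<close> by simp
  qed
  ultimately show ?thesis using deg_ge_2[OF \<open>x \<in> V\<close>] by linarith
qed

lemma deg2_nbr_absurd: False
proof -
  have "inv_deg x \<le> 1/4" if "x \<in> N w - {a}" for x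
    using other_nbrs_deg_ge_4[of x] inv_deg_le[of 4 x] that by simp
  then have "nbr_mass w \<le> inv_deg a + (3 - 1) * (1/4)"
    using nbr_mass_le[of "{a}" w "1/4"] nbrs_w deg_w by simp
  then have mass_w: "nbr_mass w \<le> 1" using inv_deg_eq[OF deg_a] by simp
  have "a \<in> N w" "a \<in> N a'" using nbrs_w nbrs_a nbrs_sym by auto
  then have "1/2 \<le> common_mass w a'" using common_mass_ge inv_deg_eq[OF deg_a] by fastforce
  moreover have "(3 + real (d a')) / 4 \<le> nbr_mass w + nbr_mass a' - 2 * common_mass w a'"
    using pair_bound[OF w_in_V far_nbr_in_V] \<open>a' \<noteq> w\<close> deg_w by simp
  ultimately have lower: "(3 + real (d a')) / 4 \<le> nbr_mass a'" using mass_w by linarith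
  have "inv_deg v \<le> 1/3" if "v \<in> N a' - {a}" for v
  proof -
    have "d v \<noteq> 2"
    proof
      assume "d v = 2"
      then have "d w = 2"
        using nbr_of_deg2_pair_has_deg_2[of a a' v w] \<open>a \<in> N a'\<close> that deg_a nbrs_a \<open>a' \<noteq> w\<close>
        by auto
      then show False using deg_w by simp
    qed
    then show ?thesis using inv_deg_le_third that nbrs_subset by blast
  qed
  then have "nbr_mass a' \<le> inv_deg a + (real (d a') - 1) * (1/3)"
    using nbr_mass_le[of "{a}" a' "1/3"] \<open>a \<in> N a'\<close> by simp
  then have upper: "nbr_mass a' \<le> 1/2 + (real (d a') - 1) / 3" using inv_deg_eq[OF deg_a] by simp
  have "a \<in> V" using \<open>a \<in> N w\<close> nbrs_subset by blast
  then have "1/6 \<le> inv_deg a'" using vertex_bound[of a] nbr_mass_deg2_nbr deg_a by simp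
  then have "real (d a') \<le> 6"
    using deg_pos[OF far_nbr_in_V] by (simp add: inv_deg_def field_simps)
  with lower upper show False by (simp add: field_simps)
qed

end

context
  assumes no_deg2_nbr: "\<And>x. x \<in> N w \<Longrightarrow> d x \<noteq> 2"
begin

lemma nbr_mass_w_le: "x \<in> N w \<Longrightarrow> nbr_mass w \<le> inv_deg x + 2/3"
proof -
  assume "x \<in> N w"
  have "inv_deg v \<le> 1/3" if "v \<in> N w - {x}" for v
    using inv_deg_le_third no_deg2_nbr that nbrs_subset by blast
  then show ?thesis using nbr_mass_le[of "{x}" w "1/3"] \<open>x \<in> N w\<close> deg_w by simp
qed

lemma second_nbrs_deg_ne_2:
  assumes "x \<in> N w" "y \<in> N x"
  shows "d y \<noteq> 2"
proof
  assume "d y = 2"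
  obtain y' where "N y = {x, y'}" and mass_y: "nbr_mass y = inv_deg x + inv_deg y'"
    using deg_2_nbrs[OF \<open>d y = 2\<close> nbrs_sym[OF assms(2)]] by blast
  have "y \<in> V" "y' \<in> V" using assms(2) \<open>N y = {x, y'}\<close> nbrs_subset by blast+
  have "w \<noteq> y" using deg_w \<open>d y = 2\<close> by auto
  have "inv_deg x \<le> common_mass w y" using common_mass_ge assms nbrs_sym by blast
  moreover have "(real (d w) + real (d y)) / 4 \<le> nbr_mass w + nbr_mass y - 2 * common_mass w y"
    using pair_bound w_in_V \<open>y \<in> V\<close> \<open>w \<noteq> y\<close> by blast
  moreover have "inv_deg y' \<le> 1/2" using inv_deg_le_half \<open>y' \<in> V\<close> by blast
  ultimately show False using nbr_mass_w_le[OF assms(1)] mass_y deg_w \<open>d y = 2\<close> by simp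
qed

lemma nbr_mass_nbr_le: "x \<in> N w \<Longrightarrow> nbr_mass x \<le> real (d x) / 3"
proof -
  assume x: "x \<in> N w"
  have "inv_deg v \<le> 1/3" if "v \<in> N x - {w}" for v
    using inv_deg_le_third second_nbrs_deg_ne_2[OF x] that nbrs_subset by blast
  then have "nbr_mass x \<le> inv_deg w + (real (d x) - 1) * (1/3)"
    using nbr_mass_le[of "{w}" x "1/3"] nbrs_sym[OF x] by simp
  then show ?thesis using inv_deg_eq[OF deg_w] by (simp add: field_simps)
qed

lemma nbr_deg_sum_ge_8:
  assumes "x \<in> N w" "y \<in> N w" "x \<noteq> y"
  shows "8 \<le> d x + d y"
proof -
  have "x \<in> V" "y \<in> V" using assms nbrs_subset by blast+
  have "inv_deg w \<le> common_mass x y" using common_mass_ge assms(1,2) nbrs_sym by blast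
  have "(real (d x) + real (d y)) / 4 \<le> nbr_mass x + nbr_mass y - 2 * common_mass x y"
    by (rule pair_bound) fact+
  also have "\<dots> \<le> real (d x) / 3 + real (d y) / 3 - 2/3"
    using nbr_mass_nbr_le[OF assms(1)] nbr_mass_nbr_le[OF assms(2)] \<open>inv_deg w \<le> common_mass x y\<close>
      inv_deg_eq[OF deg_w] by simp
  finally have "real 8 \<le> real (d x + d y)" by (simp add: field_simps)
  then show ?thesis by (simp only: of_nat_le_iff)
qed

lemma nbr_degs_eq_4: "d a = 4 \<and> d b = 4 \<and> d c = 4"
proof (rule reciprocal_sum_ge_three_quarters)
  have "3 \<le> d x" if "x \<in> N w" for x
    using no_deg2_nbr[OF that] deg_ge_2[of x] that nbrs_subset by fastforce
  then show "3 \<le> d a" "3 \<le> d b" "3 \<le> d c" using nbrs_w by auto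
  show "8 \<le> d a + d b" "8 \<le> d a + d c" "8 \<le> d b + d c"
    using nbr_deg_sum_ge_8 nbrs_w distinct by auto
  show "3/4 \<le> 1 / real (d a) + 1 / real (d b) + 1 / real (d c)"
    using vertex_bound[OF w_in_V] nbr_mass_w deg_w by (simp add: inv_deg_def)
qed

lemma no_deg2_nbr_absurd: False
proof -
  have deg_4: "d a = 4" "d b = 4" "d c = 4" using nbr_degs_eq_4 by auto
  then have mass_w: "nbr_mass w = 3/4" using nbr_mass_w by (simp add: inv_deg_eq)
  have "a \<in> N w" "b \<in> N w" using nbrs_w by auto
  have "w \<in> N a" using nbrs_sym[OF \<open>a \<in> N w\<close>] .
  have "card (N a - {w}) = 3" using \<open>w \<in> N a\<close> deg_4 finite_nbrs by (simp add: deg_def)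
  then obtain z where "z \<in> N a" "z \<noteq> w" by (metis DiffE card.empty ex_in_conv singletonI zero_neq_numeral)
  have "z \<in> V" using \<open>z \<in> N a\<close> nbrs_subset by blast
  have "d z \<noteq> 2" using second_nbrs_deg_ne_2[OF \<open>a \<in> N w\<close> \<open>z \<in> N a\<close>] .
  have "a \<in> N z" using nbrs_sym[OF \<open>z \<in> N a\<close>] .
  show False
  proof (cases "d z = 3")
    case True
    obtain p q where "N z = {a, p, q}" "p \<noteq> q"
      and mass_z: "nbr_mass z = inv_deg a + inv_deg p + inv_deg q"
      using deg_3_nbrs[OF True \<open>a \<in> N z\<close>] by blast
    have "p \<in> V" "q \<in> V" using \<open>N z = {a, p, q}\<close> nbrs_subset by blast+
    have "inv_deg a \<le> common_mass w z" using common_mass_ge \<open>a \<in> N w\<close> \<open>a \<in> N z\<close> .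
    moreover have "(real (d w) + real (d z)) / 4 \<le> nbr_mass w + nbr_mass z - 2 * common_mass w z"
      using pair_bound w_in_V \<open>z \<in> V\<close> \<open>z \<noteq> w\<close> by simp
    moreover have "inv_deg p \<le> 1/2" "inv_deg q \<le> 1/2" using \<open>p \<in> V\<close> \<open>q \<in> V\<close> inv_deg_le_half by blast+
    ultimately have "1/3 < inv_deg p" "1/3 < inv_deg q"
      using mass_w mass_z deg_w True inv_deg_eq[OF deg_4(1)] by simp_all
    then have "d p = 2" "d q = 2" using deg_eq_2_if_inv_deg_gt_third \<open>p \<in> V\<close> \<open>q \<in> V\<close> by blast+
    then show False
      using no_two_deg2_nbrs[of z p q] True \<open>N z = {a, p, q}\<close> \<open>p \<noteq> q\<close> by simp
  next
    case False
    then have "4 \<le> d z" using \<open>d z \<noteq> 2\<close> deg_ge_2[OF \<open>z \<in> V\<close>] by linarith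
    then have "inv_deg z \<le> 1/4" using inv_deg_le[of 4 z] by simp
    have "inv_deg v \<le> 1/3" if "v \<in> N a - {w, z}" for v
      using inv_deg_le_third second_nbrs_deg_ne_2[OF \<open>a \<in> N w\<close>] that nbrs_subset by blast
    then have "nbr_mass a \<le> (inv_deg w + inv_deg z) + (real (d a) - 2) * (1/3)"
      using nbr_mass_le[of "{w, z}" a "1/3"] \<open>w \<in> N a\<close> \<open>z \<in> N a\<close> \<open>z \<noteq> w\<close> by simp
    then have "nbr_mass a \<le> 5/4" using \<open>inv_deg z \<le> 1/4\<close> inv_deg_eq[OF deg_w] deg_4 by simp
    moreover have "nbr_mass b \<le> 4/3" using nbr_mass_nbr_le[OF \<open>b \<in> N w\<close>] deg_4 by simp
    moreover have "inv_deg w \<le> common_mass a b"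
      using common_mass_ge nbrs_sym \<open>a \<in> N w\<close> \<open>b \<in> N w\<close> by blast
    moreover have "(real (d a) + real (d b)) / 4 \<le> nbr_mass a + nbr_mass b - 2 * common_mass a b"
      using pair_bound \<open>a \<in> N w\<close> \<open>b \<in> N w\<close> nbrs_subset distinct(1) by blast
    ultimately show False using deg_4 inv_deg_eq[OF deg_w] by simp
  qed
qed

end

end

lemma deg_ne_3: "d w \<noteq> 3"
proof
  assume deg_w: "d w = 3"
  then have "N w \<noteq> {}" by (auto simp: deg_def)
  then obtain x where "x \<in> N w" by blast
  show False
  proof (cases "\<exists>y\<in>N w. d y = 2")
    case True
    then obtain y where "y \<in> N w" "d y = 2" by blast
    obtain p q where "N w = {y, p, q}" "p \<noteq> y" "q \<noteq> y" "p \<noteq> q"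
      using deg_3_nbrs[OF deg_w \<open>y \<in> N w\<close>] by blast
    obtain y' where "N y = {w, y'}" "y' \<noteq> w"
      using deg_2_nbrs[OF \<open>d y = 2\<close> nbrs_sym[OF \<open>y \<in> N w\<close>]] by blast
    show False
      by (rule deg2_nbr_absurd[of w y p q y']) (use deg_w \<open>d y = 2\<close> \<open>N w = {y, p, q}\<close>
          \<open>N y = {w, y'}\<close> \<open>p \<noteq> y\<close> \<open>q \<noteq> y\<close> \<open>p \<noteq> q\<close> \<open>y' \<noteq> w\<close> in auto)
  next
    case False
    obtain p q where "N w = {x, p, q}" "p \<noteq> x" "q \<noteq> x" "p \<noteq> q"
      using deg_3_nbrs[OF deg_w \<open>x \<in> N w\<close>] by blast
    show False
      by (rule no_deg2_nbr_absurd[of w x p q]) (use deg_w False \<open>N w = {x, p, q}\<close>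
          \<open>p \<noteq> x\<close> \<open>q \<noteq> x\<close> \<open>p \<noteq> q\<close> in auto)
  qed
qed

end

theorem mainTheorem12:
  fixes V :: "'a set" and E :: "'a \<Rightarrow> 'a \<Rightarrow> bool"
  assumes "simple_graph V E"
    and "connected_graph V E"
    and "card V \<ge> 3"
    and "min_degree V E = 2"
    and "spectral_eps V E = 1/2"
    and "\<not> (\<exists>u v w. u \<in> V \<and> v \<in> V \<and> w \<in> V \<and> u \<noteq> v \<and> v \<noteq> w \<and> u \<noteq> w
             \<and> E u v \<and> E v w \<and> deg V E u = 2 \<and> deg V E v = 2 \<and> deg V E w \<in> {2, 3})"
  shows "\<forall>v\<in>V. deg V E v \<noteq> 3"
proof -
  interpret finite_graph V E by unfold_locales (rule assms(1))
  interpret eps_half_graph V E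
  proof
    fix v assume "v \<in> V"
    then show "2 \<le> deg V E v"
      using assms(4) Min_le[of "deg V E ` V" "deg V E v"] finite_V by (simp add: min_degree_def)
  next
    fix u v w assume "E u v" "E v w" "u \<noteq> w" "deg V E u = 2" "deg V E v = 2" "deg V E w \<in> {2, 3}"
    then show False using assms(6) adj_in_V adj_irrefl by metis
  qed (rule assms(5))
  show ?thesis using deg_ne_3 by blast
qed

end
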